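(* For every integer $n\ge 2$, the Mutt polynomial \[ M(x)=\frac{(2n-1)T_{2n+1}(\sqrt{x})+(2n+1)T_{2n-1}(\sqrt{x})}{x\sqrt{x}} \] is a polynomial in $x$ of degree $n-1$ with leading coefficient $(2n-1)2^{2n}$, and \[ \operatorname{Disc}_x M(x)=\pm\,3\,(2n-1)^{n-3}(2n+1)^{n-2}\,n^{n-3}\,2^{2n^2-n-5}. \]
   Context: $T_m$ is the Chebyshev polynomial of the first kind, $T_m(\cos\theta)=\cos m\theta$. The discriminant of a polynomial of degree $d$ with leading coefficient $\gamma$ and roots $r_1,\dots,r_d$ is $\gamma^{2d-2}\prod_{i<j}(r_i-r_j)^2$ (equal to $1$ when $d=1$). *)

theory Defs
  imports "HOL-Analysis.Analysis" "HOL-Computational_Algebra.Polynomial"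
begin

definition cheb :: "nat \<Rightarrow> real poly" where
  "cheb m = (THE p. \<forall>t::real. poly p (cos t) = cos (real m * t))"

text \<open>Discriminant of a polynomial of degree d with leading coefficient g and
  roots r_1..r_d (with multiplicity):  g^(2d-2) * prod_{i<j} (r_i - r_j)^2.
  The roots are taken as any list rs with p = g * prod (X - r) (over the complex
  numbers such a list exists; the expression is symmetric in the roots).\<close>
definition disc :: "complex poly \<Rightarrow> complex" where
  "disc p = (let d = degree p;
                 rs = (SOME rs. length rs = d \<and>
                        p = smult (lead_coeff p) (prod_list (map (\<lambda>r. [:-r, 1:]) rs)))
             in lead_coeff p ^ (2 * d - 2) *
                (\<Prod>i<d. \<Prod>j\<in>{i<..<d}. (rs ! i - rs ! j)^2))"

end

(*
  Write S(x) = T_n(2x - 1), so that S(cos^2 t) = cos (2 n t).  Then M is characterised by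
  x M(x) = (2/n) ((1 - x) S'(x) + 2 n^2 S(x)), and the Chebyshev differential equation
  2x(1-x) S'' + (1-2x) S' + 2n^2 S = 0 turns this into n x M' + (3n/2) M = (4n^2 - 1) S',
  while n^2 S^2 + x(1-x) S'^2 = n^2.

  Up to sign and a power of the leading coefficient, Disc M is the product of M'(r) over the
  roots r of M.  At these roots n r M'(r) = (4n^2 - 1) S'(r), and by the symmetry of the
  resultant the product of the S'(r) becomes the product of M(q) over the roots q of S', where
  q M(q) = 4n S(q) = +-4n.  The products of the roots r and q are read off from M(0) and S'(0),
  which are known explicitly.  Everything is done for the square of the discriminant.
*)

theory Submission
  imports Defs "HOL-Computational_Algebra.Fundamental_Theorem_Algebra"
begin

section \<open>Polynomials and their roots\<close>

lemma poly_eqI_infinite: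
  fixes p q :: "'a::idom poly"
  assumes "infinite S" and "\<And>x. x \<in> S \<Longrightarrow> poly p x = poly q x"
  shows "p = q"
proof (rule ccontr)
  assume "p \<noteq> q"
  then have "finite {x. poly (p - q) x = 0}" by (intro poly_roots_finite) simp
  moreover have "S \<subseteq> {x. poly (p - q) x = 0}" using assms(2) by auto
  ultimately show False using assms(1) finite_subset by blast
qed

lemma real_poly_eqI_Ioo:
  fixes p q :: "real poly"
  assumes "\<And>x. 0 < x \<Longrightarrow> x < 1 \<Longrightarrow> poly p x = poly q x"
  shows "p = q"
  using assms by (intro poly_eqI_infinite[of "{0<..<1}"]) auto

lemma map_poly_of_real_add:
  "map_poly of_real (p + q) = (map_poly of_real p + map_poly of_real q :: 'a::real_field poly)"
  by (rule poly_eqI) (simp add: coeff_map_poly)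

lemma map_poly_of_real_uminus:
  "map_poly of_real (- p) = (- map_poly of_real p :: 'a::real_field poly)"
  by (rule poly_eqI) (simp add: coeff_map_poly)

lemma map_poly_of_real_mult:
  "map_poly of_real (p * q) = (map_poly of_real p * map_poly of_real q :: 'a::real_field poly)"
  by (rule poly_eqI) (simp add: coeff_map_poly coeff_mult)

lemma map_poly_of_real_pderiv:
  "map_poly of_real (pderiv p) = (pderiv (map_poly of_real p) :: 'a::real_field poly)"
  by (rule poly_eqI) (simp add: coeff_map_poly coeff_pderiv)

lemmas map_poly_of_real_simps =
  map_poly_of_real_add map_poly_of_real_uminus map_poly_of_real_mult map_poly_of_real_pderiv
  map_poly_smult map_poly_pCons

lemma poly_map_poly_of_real:
  "poly (map_poly of_real p) (of_real x) = (of_real (poly p x) :: 'a::real_field)"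
  by (induction p) (simp_all add: map_poly_pCons)

lemma degree_map_poly_of_real:
  "degree (map_poly (of_real :: real \<Rightarrow> 'a::real_field) p) = degree p"
  by (simp add: degree_map_poly)

lemma lead_coeff_map_poly_of_real:
  "lead_coeff (map_poly of_real p) = (of_real (lead_coeff p) :: 'a::real_field)"
  by (simp add: degree_map_poly_of_real coeff_map_poly)

lemma prod_off_diagonal:
  fixes f :: "nat \<Rightarrow> nat \<Rightarrow> 'a::comm_monoid_mult"
  shows "(\<Prod>i<d. \<Prod>j\<in>{..<d} - {i}. f i j) = (\<Prod>i<d. \<Prod>j\<in>{i<..<d}. f i j * f j i)"
proof -
  define A where "A = (SIGMA i:{..<d}. {i<..<d})"
  have "finite A" by (simp add: A_def)
  have "(\<Prod>i<d. \<Prod>j\<in>{..<d} - {i}. f i j) = (\<Prod>(i, j)\<in>(SIGMA i:{..<d}. {..<d} - {i}). f i j)"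
    by (rule prod.Sigma) auto
  also have "(SIGMA i:{..<d}. {..<d} - {i}) = A \<union> prod.swap ` A"
    by (auto simp: A_def image_iff)
  also have "(\<Prod>(i, j)\<in>A \<union> prod.swap ` A. f i j) = (\<Prod>(i, j)\<in>A. f i j) * (\<Prod>(i, j)\<in>A. f j i)"
    using \<open>finite A\<close> by (subst prod.union_disjoint) (auto simp: A_def prod.reindex)
  also have "\<dots> = (\<Prod>i<d. \<Prod>j\<in>{i<..<d}. f i j * f j i)"
    unfolding A_def by (simp add: prod.Sigma[symmetric] prod.distrib)
  finally show ?thesis .
qed

lemma poly_prod_linear_root:
  fixes r :: "nat \<Rightarrow> 'a::idom"
  assumes "i < d"
  shows "poly (smult c (\<Prod>k<d. [:-r k, 1:])) (r i) = 0"
  using assms by (auto simp: poly_prod prod_zero_iff)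

lemma poly_prod_linear_0:
  fixes r :: "nat \<Rightarrow> 'a::idom"
  shows "poly (smult c (\<Prod>k<d. [:-r k, 1:])) 0 = (-1) ^ d * c * (\<Prod>k<d. r k)"
  by (simp add: poly_prod prod_uminus)

lemma poly_pderiv_prod_linear_root:
  fixes r :: "nat \<Rightarrow> 'a::idom"
  assumes "i < d"
  shows "poly (pderiv (smult c (\<Prod>k<d. [:-r k, 1:]))) (r i) = c * (\<Prod>j\<in>{..<d} - {i}. r i - r j)"
proof -
  have "poly (pderiv (smult c (\<Prod>k<d. [:-r k, 1:]))) (r i)
      = c * (\<Sum>k<d. \<Prod>j\<in>{..<d} - {k}. r i - r j)"
    by (simp add: pderiv_smult pderiv_prod poly_sum poly_prod pderiv_pCons)
  also have "(\<Sum>k<d. \<Prod>j\<in>{..<d} - {k}. r i - r j) = (\<Prod>j\<in>{..<d} - {i}. r i - r j)"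
    using assms by (subst sum.remove[of _ i]) (auto intro!: sum.neutral prod_zero)
  finally show ?thesis .
qed

(* The symmetry Res(q, p) = (-1)^(deg p * deg q) Res(p, q) of the resultant, in terms of roots. *)
lemma prod_poly_prod_linear_swap:
  fixes r s :: "nat \<Rightarrow> 'a::idom"
  shows "(\<Prod>i<m. poly (smult b (\<Prod>k<l. [:-s k, 1:])) (r i)) * a ^ l
       = (-1) ^ (m * l) * b ^ m * (\<Prod>k<l. poly (smult a (\<Prod>i<m. [:-r i, 1:])) (s k))"
proof -
  have "(\<Prod>i<m. s k - r i) = (-1) ^ m * (\<Prod>i<m. r i - s k)" for k
    using prod_uminus[of "\<lambda>i. r i - s k" "{..<m}"] by simp
  then have "(\<Prod>k<l. poly (smult a (\<Prod>i<m. [:-r i, 1:])) (s k))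
      = (-1) ^ (m * l) * a ^ l * (\<Prod>k<l. \<Prod>i<m. r i - s k)"
    by (simp add: poly_prod prod.distrib power_mult)
  moreover have "(\<Prod>i<m. poly (smult b (\<Prod>k<l. [:-s k, 1:])) (r i))
      = b ^ m * (\<Prod>k<l. \<Prod>i<m. r i - s k)"
    by (simp add: poly_prod prod.distrib prod.swap[of _ "{..<m}"])
  ultimately show ?thesis by (simp add: algebra_simps flip: power_add)
qed

(* Squaring removes the sign (-1)^(d(d-1)/2) relating the discriminant to the product of p' over
   the roots. *)
lemma disc_squared_prod_pderiv_roots:
  fixes p :: "complex poly"
  obtains r where "p = smult (lead_coeff p) (\<Prod>i<degree p. [:-r i, 1:])"
    "disc p ^ 2 * lead_coeff p ^ (2 * degree p)
       = lead_coeff p ^ (4 * degree p - 4) * (\<Prod>i<degree p. poly (pderiv p) (r i)) ^ 2"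
proof -
  define L where "L = lead_coeff p"
  define d where "d = degree p"
  define rs where
    "rs = (SOME rs. length rs = d \<and> p = smult L (prod_list (map (\<lambda>r. [:-r, 1:]) rs)))"
  obtain root where "smult L (\<Prod>i<d. [:-root i, 1:]) = p"
    unfolding L_def d_def by (rule complex_poly_decompose')
  then have "length (map root [0..<d]) = d
      \<and> p = smult L (prod_list (map (\<lambda>r. [:-r, 1:]) (map root [0..<d])))"
    by (simp add: prod.distinct_set_conv_list[symmetric] atLeast0LessThan o_def)
  then have rs: "length rs = d \<and> p = smult L (prod_list (map (\<lambda>r. [:-r, 1:]) rs))"
    unfolding rs_def by (rule someI)
  define r where "r i = rs ! i" for i
  have p: "p = smult L (\<Prod>i<d. [:-r i, 1:])"
    using rs by (simp add: r_def prod.list_conv_set_nth atLeast0LessThan)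
  have disc: "disc p = L ^ (2 * d - 2) * (\<Prod>i<d. \<Prod>j\<in>{i<..<d}. (r i - r j) ^ 2)"
    unfolding disc_def Let_def L_def d_def rs_def r_def ..
  have "poly (pderiv p) (r i) = L * (\<Prod>j\<in>{..<d} - {i}. r i - r j)" if "i < d" for i
    using poly_pderiv_prod_linear_root[OF that] p by metis
  then have "(\<Prod>i<d. poly (pderiv p) (r i))
      = L ^ d * (\<Prod>i<d. \<Prod>j\<in>{i<..<d}. (r i - r j) * (r j - r i))"
    by (simp add: prod.distrib prod_off_diagonal[of "\<lambda>i j. r i - r j"])
  moreover have "((r i - r j) * (r j - r i)) ^ 2 = ((r i - r j) ^ 2) ^ 2" for i j
    by (simp add: power2_eq_square algebra_simps)
  ultimately have "(\<Prod>i<d. poly (pderiv p) (r i)) ^ 2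
      = L ^ (2 * d) * (\<Prod>i<d. \<Prod>j\<in>{i<..<d}. (r i - r j) ^ 2) ^ 2"
    by (simp add: power_mult_distrib power_mult[symmetric] prod_power_distrib mult.commute)
  then have "disc p ^ 2 * L ^ (2 * d) = L ^ (4 * d - 4) * (\<Prod>i<d. poly (pderiv p) (r i)) ^ 2"
    by (simp add: disc power_mult_distrib power_mult[symmetric] algebra_simps)
  with p show thesis unfolding L_def d_def by (rule that)
qed

section \<open>Chebyshev polynomials\<close>

fun chebyshev :: "nat \<Rightarrow> real poly" where
  "chebyshev 0 = 1"
| "chebyshev (Suc 0) = [:0, 1:]"
| "chebyshev (Suc (Suc n)) = smult 2 (pCons 0 (chebyshev (Suc n))) - chebyshev n"

lemma poly_chebyshev_cos: "poly (chebyshev m) (cos t) = cos (real m * t)"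
proof (induction m rule: chebyshev.induct)
  case (3 n)
  have "cos (real (Suc (Suc n)) * t) + cos (real n * t) = 2 * cos t * cos (real (Suc n) * t)"
    using cos_add[of "real (Suc n) * t" t] cos_diff[of "real (Suc n) * t" t]
    by (simp add: distrib_right)
  with 3 show ?case by simp
qed auto

lemma cheb_eq_chebyshev: "cheb m = chebyshev m"
  unfolding cheb_def
proof (rule the_equality)
  fix p assume p: "\<forall>t. poly p (cos t) = cos (real m * t)"
  show "p = chebyshev m"
  proof (rule real_poly_eqI_Ioo)
    fix x :: real assume "0 < x" "x < 1"
    then have "cos (arccos x) = x" by simp
    then show "poly p x = poly (chebyshev m) x" using p poly_chebyshev_cos by metis
  qed
qed (simp add: poly_chebyshev_cos)

lemma coeff_chebyshev_top:
  "(\<forall>k>m. coeff (chebyshev m) k = 0)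
     \<and> coeff (chebyshev m) m = (if m = 0 then 1 else 2 ^ (m - 1))"
  by (induction m rule: chebyshev.induct) (auto simp: coeff_pCons split: nat.splits)

lemma degree_chebyshev: "degree (chebyshev m) = m"
  using coeff_chebyshev_top[of m] by (intro antisym degree_le le_degree) auto

lemma lead_coeff_chebyshev: "m > 0 \<Longrightarrow> lead_coeff (chebyshev m) = 2 ^ (m - 1)"
  using coeff_chebyshev_top[of m] by (simp add: degree_chebyshev)

lemma obtain_cos_sq:
  fixes x :: real
  assumes "0 \<le> x" "x \<le> 1"
  obtains t where "cos t ^ 2 = x" "sin t ^ 2 = 1 - x"
proof
  have "0 \<le> sqrt x" "sqrt x \<le> 1" using assms by auto
  then have "cos (arccos (sqrt x)) = sqrt x" by (intro cos_arccos) linarith+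
  then show "cos (arccos (sqrt x)) ^ 2 = x" using assms by simp
  then show "sin (arccos (sqrt x)) ^ 2 = 1 - x" by (simp add: sin_squared_eq)
qed

definition shifted_chebyshev :: "nat \<Rightarrow> real poly" where
  "shifted_chebyshev n = chebyshev n \<circ>\<^sub>p [:-1, 2:]"

lemma poly_shifted_chebyshev_cos_sq:
  "poly (shifted_chebyshev n) (cos t ^ 2) = cos (2 * real n * t)"
  by (simp add: shifted_chebyshev_def poly_pcompose poly_chebyshev_cos cos_double_cos[symmetric]
      mult.commute mult.left_commute)

lemma poly_pderiv_shifted_chebyshev_cos_sq:
  "poly (pderiv (shifted_chebyshev n)) (cos t ^ 2) * (cos t * sin t) = real n * sin (2 * real n * t)"
proof -
  have "((\<lambda>t. poly (shifted_chebyshev n) (cos t ^ 2)) has_real_derivative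
      - (2 * cos t * sin t) * poly (pderiv (shifted_chebyshev n)) (cos t ^ 2)) (at t)"
    by (auto intro!: derivative_eq_intros)
  moreover have "((\<lambda>t. poly (shifted_chebyshev n) (cos t ^ 2)) has_real_derivative
      - (sin (2 * real n * t) * (2 * real n))) (at t)"
    unfolding poly_shifted_chebyshev_cos_sq by (auto intro!: derivative_eq_intros)
  ultimately show ?thesis by (auto dest: DERIV_unique simp: algebra_simps)
qed

lemma shifted_chebyshev_ode:
  "smult 2 ([:0, 1, -1:] * pderiv (pderiv (shifted_chebyshev n)))
     + [:1, -2:] * pderiv (shifted_chebyshev n) + smult (2 * real n ^ 2) (shifted_chebyshev n) = 0"
proof (rule real_poly_eqI_Ioo)
  fix x :: real assume "0 < x" "x < 1"
  then obtain t where x: "cos t ^ 2 = x" and sx: "sin t ^ 2 = 1 - x"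
    using obtain_cos_sq[of x] by force
  let ?S = "shifted_chebyshev n"
  have "((\<lambda>t. poly (pderiv ?S) (cos t ^ 2) * (cos t * sin t)) has_real_derivative
      - (2 * cos t * sin t) * poly (pderiv (pderiv ?S)) (cos t ^ 2) * (cos t * sin t)
      + poly (pderiv ?S) (cos t ^ 2) * (cos t * cos t - sin t * sin t)) (at t)"
    by (auto intro!: derivative_eq_intros simp: algebra_simps)
  moreover have "((\<lambda>t. poly (pderiv ?S) (cos t ^ 2) * (cos t * sin t)) has_real_derivative
      real n * (cos (2 * real n * t) * (2 * real n))) (at t)"
    unfolding poly_pderiv_shifted_chebyshev_cos_sq by (auto intro!: derivative_eq_intros)
  ultimately have "- 2 * (cos t ^ 2 * sin t ^ 2) * poly (pderiv (pderiv ?S)) (cos t ^ 2)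
      + poly (pderiv ?S) (cos t ^ 2) * (cos t ^ 2 - sin t ^ 2)
      = 2 * real n ^ 2 * poly ?S (cos t ^ 2)"
    unfolding poly_shifted_chebyshev_cos_sq
    by (auto dest: DERIV_unique simp: power2_eq_square algebra_simps)
  then show "poly (smult 2 ([:0, 1, -1:] * pderiv (pderiv ?S)) + [:1, -2:] * pderiv ?S
      + smult (2 * real n ^ 2) ?S) x = poly 0 x"
    unfolding x sx by (simp add: algebra_simps)
qed

lemma shifted_chebyshev_pell:
  "smult (real n ^ 2) (shifted_chebyshev n ^ 2) + [:0, 1, -1:] * pderiv (shifted_chebyshev n) ^ 2
     = [:real n ^ 2:]"
proof (rule real_poly_eqI_Ioo)
  fix x :: real assume "0 < x" "x < 1"
  then obtain t where x: "cos t ^ 2 = x" and sx: "sin t ^ 2 = 1 - x"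
    using obtain_cos_sq[of x] by force
  let ?S = "shifted_chebyshev n"
  have "cos t ^ 2 * sin t ^ 2 * poly (pderiv ?S) (cos t ^ 2) ^ 2 = real n ^ 2 * sin (2 * real n * t) ^ 2"
    using arg_cong[OF poly_pderiv_shifted_chebyshev_cos_sq[of n t], of "\<lambda>y. y ^ 2"]
    by (simp add: power_mult_distrib algebra_simps)
  then have "real n ^ 2 * poly ?S (cos t ^ 2) ^ 2
      + cos t ^ 2 * sin t ^ 2 * poly (pderiv ?S) (cos t ^ 2) ^ 2
      = real n ^ 2 * (cos (2 * real n * t) ^ 2 + sin (2 * real n * t) ^ 2)"
    unfolding poly_shifted_chebyshev_cos_sq by (simp only: distrib_left)
  also have "\<dots> = real n ^ 2" by simp
  finally show "poly (smult (real n ^ 2) (?S ^ 2) + [:0, 1, -1:] * pderiv ?S ^ 2) x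
      = poly [:real n ^ 2:] x"
    unfolding x sx by (simp add: algebra_simps)
qed

lemma poly_shifted_chebyshev_ode:
  "2 * x * (1 - x) * poly (pderiv (pderiv (shifted_chebyshev n))) x
     + (1 - 2 * x) * poly (pderiv (shifted_chebyshev n)) x
     + 2 * real n ^ 2 * poly (shifted_chebyshev n) x = 0"
  using arg_cong[OF shifted_chebyshev_ode[of n], of "\<lambda>p. poly p x"] by (simp add: algebra_simps)

lemma degree_shifted_chebyshev: "degree (shifted_chebyshev n) = n"
  by (simp add: shifted_chebyshev_def degree_pcompose degree_chebyshev)

lemma lead_coeff_shifted_chebyshev:
  assumes "n > 0"
  shows "lead_coeff (shifted_chebyshev n) = 2 ^ (2 * n - 1)"
proof -
  have "lead_coeff (shifted_chebyshev n) = lead_coeff (chebyshev n) * 2 ^ n"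
    unfolding shifted_chebyshev_def by (subst lead_coeff_comp) (simp_all add: degree_chebyshev)
  also have "\<dots> = 2 ^ (2 * n - 1)"
    using assms by (simp add: lead_coeff_chebyshev power_add[symmetric])
  finally show ?thesis .
qed

lemma lead_coeff_pderiv_shifted_chebyshev:
  assumes "n > 0"
  shows "lead_coeff (pderiv (shifted_chebyshev n)) = real n * 2 ^ (2 * n - 1)"
  using assms lead_coeff_shifted_chebyshev[OF assms]
  by (simp add: degree_pderiv degree_shifted_chebyshev coeff_pderiv)

lemma poly_shifted_chebyshev_0: "poly (shifted_chebyshev n) 0 = (-1) ^ n"
  using poly_chebyshev_cos[of n pi]
  by (simp add: shifted_chebyshev_def poly_pcompose)

lemma poly_pderiv_shifted_chebyshev_0: "poly (pderiv (shifted_chebyshev n)) 0 = - 2 * real n ^ 2 * (-1) ^ n"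
  using poly_shifted_chebyshev_ode[of 0 n] by (simp add: poly_shifted_chebyshev_0)

section \<open>The Mutt polynomial\<close>

(* x M(x) = (2/n) ((1 - x) S'(x) + 2 n^2 S(x)); the right-hand side vanishes at 0 by the
   differential equation of S, so the division by x is exact. *)
definition mutt :: "nat \<Rightarrow> real poly" where
  "mutt n = smult (2 / real n) (synthetic_div
     ([:1, -1:] * pderiv (shifted_chebyshev n) + smult (2 * real n ^ 2) (shifted_chebyshev n)) 0)"

lemma pCons_0_mutt:
  "pCons 0 (mutt n) = smult (2 / real n)
     ([:1, -1:] * pderiv (shifted_chebyshev n) + smult (2 * real n ^ 2) (shifted_chebyshev n))"
proof -
  let ?W = "[:1, -1:] * pderiv (shifted_chebyshev n) + smult (2 * real n ^ 2) (shifted_chebyshev n)"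
  have "poly ?W 0 = 0" using poly_shifted_chebyshev_ode[of 0 n] by simp
  then have "pCons 0 (synthetic_div ?W 0) = ?W"
    using synthetic_div_correct'[of 0 ?W] by (simp add: mult_pCons_left)
  then show ?thesis unfolding mutt_def by (metis mult_zero_right smult_pCons)
qed

lemma poly_mutt_times:
  "x * poly (mutt n) x = 2 / real n * ((1 - x) * poly (pderiv (shifted_chebyshev n)) x
     + 2 * real n ^ 2 * poly (shifted_chebyshev n) x)"
  using arg_cong[OF pCons_0_mutt[of n], of "\<lambda>p. poly p x"] by (simp add: algebra_simps)

lemma mutt_pderiv_identity:
  assumes "n > 0"
  shows "smult (real n) ([:0, 1:] * pderiv (mutt n)) + smult (3 * real n / 2) (mutt n)
     = smult (4 * real n ^ 2 - 1) (pderiv (shifted_chebyshev n))"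
proof -
  let ?S = "shifted_chebyshev n"
  have "[:0, 1:] * (smult (real n) ([:0, 1:] * pderiv (mutt n)) + smult (3 * real n / 2) (mutt n))
      = [:0, 1:] * smult (4 * real n ^ 2 - 1) (pderiv ?S)"
  proof (rule poly_eq_poly_eq_iff[THEN iffD1, OF ext])
    fix x :: real
    define c where "c = 2 / real n"
    have Mx: "x * poly (mutt n) x = c * ((1 - x) * poly (pderiv ?S) x + 2 * real n ^ 2 * poly ?S x)"
      unfolding c_def by (rule poly_mutt_times)
    have "poly (pderiv (pCons 0 (mutt n))) x = poly (pderiv (smult c
       ([:1, -1:] * pderiv ?S + smult (2 * real n ^ 2) ?S))) x"
      unfolding c_def pCons_0_mutt ..
    then have dMx: "poly (mutt n) x + x * poly (pderiv (mutt n)) x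
        = c * (- poly (pderiv ?S) x + (1 - x) * poly (pderiv (pderiv ?S)) x
               + 2 * real n ^ 2 * poly (pderiv ?S) x)"
      by (simp add: pderiv_pCons pderiv_mult pderiv_smult pderiv_add pderiv_minus algebra_simps)
    have "x * (real n * (x * poly (pderiv (mutt n)) x) + 3 * real n / 2 * poly (mutt n) x)
        = real n * x * (poly (mutt n) x + x * poly (pderiv (mutt n)) x)
          + real n / 2 * (x * poly (mutt n) x)"
      by (simp add: algebra_simps)
    also have "\<dots> = x * (4 * real n ^ 2 - 1) * poly (pderiv ?S) x
        + (2 * x * (1 - x) * poly (pderiv (pderiv ?S)) x + (1 - 2 * x) * poly (pderiv ?S) x
           + 2 * real n ^ 2 * poly ?S x)"
      unfolding dMx Mx c_def using assms by (simp add: field_simps)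
    also have "\<dots> = x * ((4 * real n ^ 2 - 1) * poly (pderiv ?S) x)"
      by (simp add: poly_shifted_chebyshev_ode)
    finally show "poly ([:0, 1:] * (smult (real n) ([:0, 1:] * pderiv (mutt n))
        + smult (3 * real n / 2) (mutt n))) x
      = poly ([:0, 1:] * smult (4 * real n ^ 2 - 1) (pderiv ?S)) x"
      by (simp add: algebra_simps)
  qed
  then show ?thesis by (simp only: mult_cancel_left pCons_eq_0_iff) simp
qed

lemma mutt_chebyshev:
  assumes "n > 0"
  shows "smult (2 * real n - 1) (chebyshev (2 * n + 1)) + smult (2 * real n + 1) (chebyshev (2 * n - 1))
       = [:0, 0, 0, 1:] * (mutt n \<circ>\<^sub>p [:0, 0, 1:])"
proof (rule real_poly_eqI_Ioo)
  fix s :: real assume "0 < s" "s < 1"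
  then have s: "cos (arccos s) = s" by (intro cos_arccos) auto
  define t where "t = arccos s"
  let ?S = "shifted_chebyshev n"
  have Tp: "poly (chebyshev (2 * n + 1)) (cos t) = cos (2 * real n * t + t)"
    by (simp add: poly_chebyshev_cos algebra_simps)
  have Tm: "poly (chebyshev (2 * n - 1)) (cos t) = cos (2 * real n * t - t)"
    using assms by (simp add: poly_chebyshev_cos of_nat_diff algebra_simps)
  have M: "cos t ^ 3 * poly (mutt n) (cos t ^ 2)
      = 2 * sin t * sin (2 * real n * t) + 4 * real n * cos (2 * real n * t) * cos t"
  proof -
    have "cos t ^ 2 * poly (mutt n) (cos t ^ 2) = 2 / real n * (sin t ^ 2 * poly (pderiv ?S) (cos t ^ 2)
        + 2 * real n ^ 2 * cos (2 * real n * t))"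
      using poly_mutt_times[of "cos t ^ 2" n] by (simp add: poly_shifted_chebyshev_cos_sq sin_squared_eq)
    then have "cos t ^ 3 * poly (mutt n) (cos t ^ 2)
        = 2 / real n * (sin t * (poly (pderiv ?S) (cos t ^ 2) * (cos t * sin t))
          + 2 * real n ^ 2 * cos (2 * real n * t) * cos t)"
      by (simp add: power3_eq_cube power2_eq_square algebra_simps)
    also have "\<dots> = 2 * sin t * sin (2 * real n * t) + 4 * real n * cos (2 * real n * t) * cos t"
      using assms unfolding poly_pderiv_shifted_chebyshev_cos_sq by (simp add: field_simps power2_eq_square)
    finally show ?thesis .
  qed
  have "(2 * real n - 1) * poly (chebyshev (2 * n + 1)) (cos t)
      + (2 * real n + 1) * poly (chebyshev (2 * n - 1)) (cos t) = cos t ^ 3 * poly (mutt n) (cos t ^ 2)"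
    unfolding Tp Tm M by (simp add: cos_add cos_diff algebra_simps)
  then show "poly (smult (2 * real n - 1) (chebyshev (2 * n + 1))
      + smult (2 * real n + 1) (chebyshev (2 * n - 1))) s
      = poly ([:0, 0, 0, 1:] * (mutt n \<circ>\<^sub>p [:0, 0, 1:])) s"
    unfolding t_def s by (simp add: poly_pcompose power_numeral_reduce algebra_simps)
qed

lemma
  assumes "n > 0"
  shows degree_mutt: "degree (mutt n) = n - 1"
    and lead_coeff_mutt: "lead_coeff (mutt n) = (2 * real n - 1) * 2 ^ (2 * n)"
proof -
  let ?E = "smult (2 * real n - 1) (chebyshev (2 * n + 1)) + smult (2 * real n + 1) (chebyshev (2 * n - 1))"
  have nz: "2 * real n - 1 \<noteq> 0" "2 * real n + 1 \<noteq> 0" using assms by linarith+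
  then have "degree (smult (2 * real n + 1) (chebyshev (2 * n - 1)))
      < degree (smult (2 * real n - 1) (chebyshev (2 * n + 1)))"
    by (simp add: degree_chebyshev)
  then have dE: "degree ?E = 2 * n + 1"
    using nz by (simp add: degree_add_eq_left degree_chebyshev)
  have lE: "lead_coeff ?E = (2 * real n - 1) * 2 ^ (2 * n)"
    using coeff_chebyshev_top[of "2 * n + 1"] coeff_chebyshev_top[of "2 * n - 1"] assms
    unfolding dE by simp
  have E: "?E = [:0, 0, 0, 1:] * (mutt n \<circ>\<^sub>p [:0, 0, 1:])" by (rule mutt_chebyshev[OF assms])
  then have "mutt n \<circ>\<^sub>p [:0, 0, 1:] \<noteq> 0" using dE by auto
  moreover have "lead_coeff (mutt n \<circ>\<^sub>p [:0, 0, 1:]) = lead_coeff (mutt n)"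
    by (subst lead_coeff_comp) simp_all
  ultimately have "degree ?E = 3 + 2 * degree (mutt n)" and "lead_coeff ?E = lead_coeff (mutt n)"
    unfolding E by (simp_all add: degree_mult_eq degree_pcompose lead_coeff_mult)
  with dE lE show "degree (mutt n) = n - 1" "lead_coeff (mutt n) = (2 * real n - 1) * 2 ^ (2 * n)"
    by simp_all
qed

lemma poly_mutt:
  assumes "n > 0" "x > 0"
  shows "poly (mutt n) x = ((2 * real n - 1) * poly (cheb (2 * n + 1)) (sqrt x)
                          + (2 * real n + 1) * poly (cheb (2 * n - 1)) (sqrt x)) / (x * sqrt x)"
  using arg_cong[OF mutt_chebyshev[OF assms(1)], of "\<lambda>p. poly p (sqrt x)"] assms(2)
  by (simp add: cheb_eq_chebyshev poly_pcompose power_numeral_reduce field_simps)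

lemma poly_mutt_0:
  assumes "n > 0"
  shows "poly (mutt n) 0 = - 4 / 3 * real n * (4 * real n ^ 2 - 1) * (-1) ^ n"
proof -
  have "3 * real n / 2 * poly (mutt n) 0 = (4 * real n ^ 2 - 1) * poly (pderiv (shifted_chebyshev n)) 0"
    using arg_cong[OF mutt_pderiv_identity[OF assms], of "\<lambda>p. poly p 0"] by simp
  then have "poly (mutt n) 0 = 2 * (4 * real n ^ 2 - 1) * poly (pderiv (shifted_chebyshev n)) 0 / (3 * real n)"
    using assms by (simp add: field_simps)
  then show ?thesis
    using assms by (simp add: poly_pderiv_shifted_chebyshev_0 power2_eq_square)
qed

section \<open>The discriminant\<close>

lemma pderiv_mutt_at_root:
  fixes z :: complex
  assumes "n > 0" and "poly (map_poly of_real (mutt n)) z = 0"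
  shows "of_nat n * z * poly (pderiv (map_poly of_real (mutt n))) z
     = (4 * of_nat n ^ 2 - 1) * poly (map_poly of_real (pderiv (shifted_chebyshev n))) z"
  using arg_cong[OF mutt_pderiv_identity[OF assms(1)], of "\<lambda>p. poly (map_poly of_real p) z"] assms(2)
  by (simp add: map_poly_of_real_simps algebra_simps)

lemma mutt_at_root_of_pderiv_shifted_chebyshev:
  fixes z :: complex
  assumes "n > 0" and "poly (map_poly of_real (pderiv (shifted_chebyshev n))) z = 0"
  shows "(z * poly (map_poly of_real (mutt n)) z) ^ 2 = 16 * of_nat n ^ 2"
proof -
  let ?S = "poly (map_poly of_real (shifted_chebyshev n)) z"
  have "z * poly (map_poly of_real (mutt n)) z = 4 * of_nat n * ?S"
    using arg_cong[OF pCons_0_mutt[of n], of "\<lambda>p. poly (map_poly of_real p) z"] assms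
    by (simp add: map_poly_of_real_simps power2_eq_square)
  moreover have "of_nat n ^ 2 * ?S ^ 2 = of_nat n ^ 2"
    using arg_cong[OF shifted_chebyshev_pell[of n], of "\<lambda>p. poly (map_poly of_real p) z"] assms(2)
    by (simp add: map_poly_of_real_simps power2_eq_square)
  ultimately show ?thesis
    using assms(1) by (simp add: power_mult_distrib)
qed

lemma prod_pderiv_mutt_at_roots:
  fixes r :: "nat \<Rightarrow> complex"
  assumes "n > 0" and M: "map_poly of_real (mutt n) = smult L (\<Prod>i<n - 1. [:-r i, 1:])"
  shows "of_nat n ^ (n - 1) * (\<Prod>i<n - 1. r i) * (\<Prod>i<n - 1. poly (pderiv (map_poly of_real (mutt n))) (r i))
       = (4 * of_nat n ^ 2 - 1) ^ (n - 1)
         * (\<Prod>i<n - 1. poly (map_poly of_real (pderiv (shifted_chebyshev n))) (r i))"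
proof -
  have "of_nat n * r i * poly (pderiv (map_poly of_real (mutt n))) (r i)
      = (4 * of_nat n ^ 2 - 1) * poly (map_poly of_real (pderiv (shifted_chebyshev n))) (r i)"
    if "i < n - 1" for i
    using pderiv_mutt_at_root[OF \<open>n > 0\<close>] poly_prod_linear_root[OF that] M by metis
  then have "(\<Prod>i<n - 1. of_nat n * r i * poly (pderiv (map_poly of_real (mutt n))) (r i))
      = (\<Prod>i<n - 1. (4 * of_nat n ^ 2 - 1) * poly (map_poly of_real (pderiv (shifted_chebyshev n))) (r i))"
    by (intro prod.cong[OF refl]) simp
  then show ?thesis by (simp add: prod.distrib)
qed

lemma prod_pderiv_shifted_chebyshev_at_mutt_roots:
  fixes r :: "nat \<Rightarrow> complex"
  assumes "n > 0" and M: "map_poly of_real (mutt n) = smult L (\<Prod>i<n - 1. [:-r i, 1:])"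
  shows "((\<Prod>i<n - 1. poly (map_poly of_real (pderiv (shifted_chebyshev n))) (r i)) * L ^ (n - 1)) ^ 2
        * poly (map_poly of_real (pderiv (shifted_chebyshev n))) 0 ^ 2
      = of_real (lead_coeff (pderiv (shifted_chebyshev n))) ^ (2 * n) * (16 * of_nat n ^ 2) ^ (n - 1)"
proof -
  define d where "d = n - 1"
  define P :: "complex poly" where "P = map_poly of_real (pderiv (shifted_chebyshev n))"
  define e where "e = lead_coeff P"
  have "degree P = d"
    by (simp add: P_def d_def degree_map_poly_of_real degree_pderiv degree_shifted_chebyshev)
  then obtain q where P: "P = smult e (\<Prod>k<d. [:-q k, 1:])"
    using complex_poly_decompose'[of P] unfolding e_def by metis
  define T where "T = (\<Prod>k<d. poly (map_poly of_real (mutt n)) (q k))"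
  define U where "U = (\<Prod>k<d. q k)"
  have swap: "(\<Prod>i<d. poly P (r i)) * L ^ d = (-1) ^ (d * d) * e ^ d * T"
    unfolding T_def P M d_def by (rule prod_poly_prod_linear_swap)
  have P0: "poly P 0 = (-1) ^ d * e * U"
    unfolding P U_def by (rule poly_prod_linear_0)
  have "(q k * poly (map_poly of_real (mutt n)) (q k)) ^ 2 = 16 * of_nat n ^ 2" if "k < d" for k
    using mutt_at_root_of_pderiv_shifted_chebyshev[OF \<open>n > 0\<close>] poly_prod_linear_root[OF that] P
    unfolding P_def by metis
  then have "(\<Prod>k<d. (q k * poly (map_poly of_real (mutt n)) (q k)) ^ 2) = (\<Prod>k<d. 16 * of_nat n ^ 2)"
    by (intro prod.cong[OF refl]) simp
  then have TU: "(T * U) ^ 2 = (16 * of_nat n ^ 2) ^ d"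
    unfolding T_def U_def prod.distrib[symmetric] prod_power_distrib by (simp add: mult.commute)
  have "((\<Prod>i<d. poly P (r i)) * L ^ d) ^ 2 * poly P 0 ^ 2 = (e ^ d) ^ 2 * e ^ 2 * (T * U) ^ 2"
    unfolding swap P0 by (simp add: power_mult_distrib minus_one_power_iff algebra_simps)
  also have "\<dots> = (e ^ d * e) ^ 2 * (16 * of_nat n ^ 2) ^ d"
    unfolding TU by (simp add: power_mult_distrib)
  also have "\<dots> = e ^ (2 * n) * (16 * of_nat n ^ 2) ^ d"
    using power_minus_mult[OF \<open>n > 0\<close>, of e] by (simp add: d_def power_even_eq)
  finally show ?thesis
    unfolding d_def P_def e_def lead_coeff_map_poly_of_real .
qed

lemma disc_mutt_squared:
  assumes "n \<ge> 2"
  shows "disc (map_poly of_real (mutt n)) ^ 2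
      * of_real ((lead_coeff (mutt n) * poly (mutt n) 0 * poly (pderiv (shifted_chebyshev n)) 0) ^ 2)
    = of_real ((4 * real n ^ 2 - 1) ^ (2 * (n - 1))
        * lead_coeff (pderiv (shifted_chebyshev n)) ^ (2 * n) * 16 ^ (n - 1))"
proof -
  define d where "d = n - 1"
  have "n > 0" "d \<ge> 1" using assms by (simp_all add: d_def)
  define M :: "complex poly" where "M = map_poly of_real (mutt n)"
  define P :: "complex poly" where "P = map_poly of_real (pderiv (shifted_chebyshev n))"
  define L where "L = lead_coeff M"
  define e where "e = lead_coeff P"
  define c where "c = 4 * of_nat n ^ 2 - (1 :: complex)"
  have "degree M = d"
    using \<open>n > 0\<close> by (simp add: M_def d_def degree_mutt degree_map_poly_of_real)
  then obtain r where M: "M = smult L (\<Prod>i<d. [:-r i, 1:])"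
    and disc: "disc M ^ 2 * L ^ (2 * d) = L ^ (4 * d - 4) * (\<Prod>i<d. poly (pderiv M) (r i)) ^ 2"
    using disc_squared_prod_pderiv_roots[of M] unfolding L_def by metis
  define Q where "Q = (\<Prod>i<d. poly (pderiv M) (r i))"
  define R where "R = (\<Prod>i<d. r i)"
  define S where "S = (\<Prod>i<d. poly P (r i))"
  have roots: "of_nat n ^ d * R * Q = c ^ d * S"
    using prod_pderiv_mutt_at_roots[OF \<open>n > 0\<close> M[unfolded M_def d_def]]
    unfolding R_def Q_def S_def M_def P_def c_def d_def .
  have M0: "poly M 0 = (-1) ^ d * L * R"
    unfolding M R_def by (rule poly_prod_linear_0)
  have resultant: "(S * L ^ d) ^ 2 * poly P 0 ^ 2 = e ^ (2 * n) * (16 * of_nat n ^ 2) ^ d"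
    using prod_pderiv_shifted_chebyshev_at_mutt_roots[OF \<open>n > 0\<close> M[unfolded M_def d_def]]
    unfolding S_def P_def e_def d_def lead_coeff_map_poly_of_real by simp
  have "2 * real n - 1 \<noteq> 0" using \<open>n > 0\<close> by linarith
  then have "lead_coeff (mutt n) \<noteq> 0" by (simp add: lead_coeff_mutt[OF \<open>n > 0\<close>])
  then have "L \<noteq> 0" unfolding L_def M_def lead_coeff_map_poly_of_real by simp
  have L4: "L ^ (4 * d - 4) * L ^ 4 = L ^ (4 * d)"
    using \<open>d \<ge> 1\<close> by (simp flip: power_add)
  have "disc M ^ 2 * (L * poly M 0 * poly P 0) ^ 2 * (L ^ (4 * d) * (of_nat n ^ d) ^ 2)
      = (disc M ^ 2 * L ^ (2 * d)) * L ^ 4 * (of_nat n ^ d * R) ^ 2 * poly P 0 ^ 2 * L ^ (2 * d)"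
    unfolding M0 by (simp add: power_mult_distrib power_mult[symmetric] power_add[symmetric] algebra_simps)
  also have "\<dots> = L ^ (4 * d) * (of_nat n ^ d * R * Q) ^ 2 * poly P 0 ^ 2 * L ^ (2 * d)"
    unfolding disc[folded Q_def] L4[symmetric] by (simp add: power_mult_distrib algebra_simps)
  also have "\<dots> = L ^ (4 * d) * (c ^ d) ^ 2 * ((S * L ^ d) ^ 2 * poly P 0 ^ 2)"
    unfolding roots by (simp add: power_mult_distrib power_mult[symmetric] algebra_simps)
  also have "\<dots> = (c ^ (2 * d) * e ^ (2 * n) * 16 ^ d) * (L ^ (4 * d) * (of_nat n ^ d) ^ 2)"
    unfolding resultant by (simp add: power_mult_distrib power_mult[symmetric] algebra_simps)
  finally have "disc M ^ 2 * (L * poly M 0 * poly P 0) ^ 2 = c ^ (2 * d) * e ^ (2 * n) * 16 ^ d"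
    using \<open>L \<noteq> 0\<close> \<open>n > 0\<close> by simp
  moreover have "of_real (lead_coeff (mutt n)) = L" "of_real (lead_coeff (pderiv (shifted_chebyshev n))) = e"
    "of_real (poly (mutt n) 0) = poly M 0" "of_real (poly (pderiv (shifted_chebyshev n)) 0) = poly P 0"
    "of_real (4 * real n ^ 2 - 1) = c"
    using poly_map_poly_of_real[where 'a = complex, of _ 0]
    by (simp_all add: L_def e_def M_def P_def c_def lead_coeff_map_poly_of_real)
  ultimately show ?thesis
    unfolding of_real_mult of_real_power of_real_numeral d_def[symmetric] M_def[symmetric] by simp
qed

lemma ln_powi:
  fixes x :: real
  assumes "x > 0"
  shows "ln (x powi k) = of_int k * ln x"
  using ln_powr[of x "of_int k"] powr_real_of_int'[of x k] assms by simp

(* Taking logarithms reduces this monomial identity to linear arithmetic in the exponents;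
   t stands for 2. *)
lemma mutt_disc_exponents:
  fixes a b N t :: real and n :: nat
  assumes "a > 0" "b > 0" "N > 0" "t > 0" "n \<ge> 1"
  shows "(a * b) ^ (2 * (n - 1)) * (N * t ^ (2 * n - 1)) ^ (2 * n) * (t ^ 4) ^ (n - 1)
     = (a powi (int n - 3) * b powi (int n - 2) * N powi (int n - 3) * t powi (2 * int n ^ 2 - int n - 5)) ^ 2
       * (a * t ^ (2 * n) * t ^ 3 * N ^ 3 * (a * b)) ^ 2"
    (is "?l = ?r")
proof -
  have "real (2 * n - 1) = 2 * real n - 1" "real (n - 1) = real n - 1"
    using assms by (simp_all add: of_nat_diff)
  then have "ln ?l = ln ?r"
    using assms by (simp add: ln_mult ln_realpow ln_powi algebra_simps) (simp add: power2_eq_square)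
  moreover have "0 < ?l" "0 < ?r" using assms by (auto intro!: mult_pos_pos)
  ultimately show ?thesis by (metis ln_inj_iff)
qed

lemma mutt_disc_value:
  fixes n :: nat
  assumes "n \<ge> 2"
  defines "D \<equiv> 3 * (2 * real n - 1) powi (int n - 3) * (2 * real n + 1) powi (int n - 2)
                  * real n powi (int n - 3) * 2 powi (2 * int n ^ 2 - int n - 5)"
  shows "(4 * real n ^ 2 - 1) ^ (2 * (n - 1)) * lead_coeff (pderiv (shifted_chebyshev n)) ^ (2 * n)
           * 16 ^ (n - 1)
       = D ^ 2 * (lead_coeff (mutt n) * poly (mutt n) 0 * poly (pderiv (shifted_chebyshev n)) 0) ^ 2"
proof -
  define a where "a = 2 * real n - 1"
  define b where "b = 2 * real n + 1"
  define X where "X = a powi (int n - 3) * b powi (int n - 2) * real n powi (int n - 3)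
                      * 2 powi (2 * int n ^ 2 - int n - 5)"
  have "n > 0" "a > 0" "b > 0" using assms by (simp_all add: a_def b_def)
  have ab: "4 * real n ^ 2 - 1 = a * b" by (simp add: a_def b_def algebra_simps power2_eq_square)
  define Y where "Y = a * 2 ^ (2 * n) * 2 ^ 3 * real n ^ 3 * (a * b)"
  have LMP: "lead_coeff (mutt n) * poly (mutt n) 0 * poly (pderiv (shifted_chebyshev n)) 0 = Y / 3"
    using \<open>n > 0\<close>
    by (simp add: Y_def ab[unfolded power2_eq_square] lead_coeff_mutt poly_mutt_0
        poly_pderiv_shifted_chebyshev_0 a_def[symmetric] power2_eq_square power3_eq_cube flip: power_add)
  have "D = 3 * X" by (simp add: D_def X_def a_def b_def)
  then have "D ^ 2 * (lead_coeff (mutt n) * poly (mutt n) 0 * poly (pderiv (shifted_chebyshev n)) 0) ^ 2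
      = X ^ 2 * Y ^ 2"
    unfolding LMP by (simp add: power_mult_distrib power_divide)
  also have "\<dots> = (a * b) ^ (2 * (n - 1)) * (real n * 2 ^ (2 * n - 1)) ^ (2 * n) * (2 ^ 4) ^ (n - 1)"
    unfolding X_def Y_def using \<open>n > 0\<close> \<open>a > 0\<close> \<open>b > 0\<close>
    by (intro mutt_disc_exponents[symmetric]) auto
  finally show ?thesis
    using \<open>n > 0\<close> by (simp add: ab lead_coeff_pderiv_shifted_chebyshev)
qed

theorem theorem3:
  fixes n :: nat
  assumes "n \<ge> 2"
  shows "\<exists>M :: real poly.
           (\<forall>x::real. x > 0 \<longrightarrow>
              poly M x = ((2 * real n - 1) * poly (cheb (2*n+1)) (sqrt x)
                          + (2 * real n + 1) * poly (cheb (2*n-1)) (sqrt x)) / (x * sqrt x))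
         \<and> degree M = n - 1
         \<and> lead_coeff M = (2 * real n - 1) * 2 ^ (2*n)
         \<and> (let D = 3 * (2 * real n - 1) powi (int n - 3) * (2 * real n + 1) powi (int n - 2)
                     * real n powi (int n - 3) * 2 powi (2 * int n ^ 2 - int n - 5)
            in disc (map_poly complex_of_real M) = complex_of_real D
             \<or> disc (map_poly complex_of_real M) = - complex_of_real D)"
proof -
  have "n > 0" using assms by simp
  define D where "D = 3 * (2 * real n - 1) powi (int n - 3) * (2 * real n + 1) powi (int n - 2)
                     * real n powi (int n - 3) * 2 powi (2 * int n ^ 2 - int n - 5)"
  define K where "K = lead_coeff (mutt n) * poly (mutt n) 0 * poly (pderiv (shifted_chebyshev n)) 0"
  have "real n \<ge> 1" "real n ^ 2 \<ge> 1" using \<open>n > 0\<close> by simp_all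
  then have "4 * real n ^ 2 \<noteq> 1" "2 * real n \<noteq> 1" by linarith+
  then have "K \<noteq> 0"
    using \<open>n > 0\<close> by (simp add: K_def lead_coeff_mutt poly_mutt_0 poly_pderiv_shifted_chebyshev_0)
  have "disc (map_poly of_real (mutt n)) ^ 2 * of_real (K ^ 2)
      = of_real ((4 * real n ^ 2 - 1) ^ (2 * (n - 1)) * lead_coeff (pderiv (shifted_chebyshev n)) ^ (2 * n)
          * 16 ^ (n - 1))"
    unfolding K_def by (rule disc_mutt_squared[OF assms])
  also have "\<dots> = of_real (D ^ 2 * K ^ 2)"
    unfolding D_def K_def mutt_disc_value[OF assms] ..
  finally have "disc (map_poly of_real (mutt n)) ^ 2 = of_real D ^ 2"
    using \<open>K \<noteq> 0\<close> by simp
  then have "disc (map_poly of_real (mutt n)) = of_real D \<or> disc (map_poly of_real (mutt n)) = - of_real D"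
    by (simp add: power2_eq_iff)
  then show ?thesis
    using poly_mutt[OF \<open>n > 0\<close>] degree_mutt[OF \<open>n > 0\<close>] lead_coeff_mutt[OF \<open>n > 0\<close>]
    unfolding D_def Let_def by blast
qed

end
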